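(* For each $N\ge1$ let $\{a_n\}_{n=0}^{N-1},\{b_n\}_{n=0}^{N-1},\{c_n\}_{n=1}^{N}$ (depending on $N$) be real sequences with $c_n>0$, $a_{N-1}=0$, $b_{N-1}=\tfrac12$, $c_N=1$, satisfying for $n=1,\dots,N-1$ $$a_{n-1}=a_n\Big(\frac{1}{c_n^2+1}\Big)^{1/2}+b_n\Big(\frac{1}{c_n^2+1}\Big)^{3/2}c_n^2,\quad b_{n-1}=b_n\Big(\frac{1}{c_n^2+1}\Big)^{3/2}+\frac{c_n}{c_n^2+1},\quad a_n+b_n=\frac{1-c_n^2}{c_n(1+c_n^2)^{1/2}},$$ and with $\Delta t_N=1/N$, $\Sigma_0>0$, $\sigma_u>0$ define $\Sigma_n=\Sigma_{n-1}/(1+c_n^2)$, $\beta_n=c_n\sigma_u\Delta t_N^{1/2}\Sigma_{n-1}^{-1/2}$, $\lambda_n=\beta_n\Sigma_{n-1}/(\beta_n^2\Sigma_{n-1}+\sigma_u^2\Delta t_N)$ for $n=1,\dots,N$. Then for every $t\in(0,1)$, as $N\to\infty$: $c_{[Nt]}\to0$, $b_{[Nt]}\to\infty$, $a_{[Nt]}\to\infty$, and $$\frac{c_{[Nt]}}{\Delta t_N^{1/2}}\to\frac{1}{(1-t)^{1/2}},\quad b_{[Nt]}\Delta t_N^{1/2}\to\tfrac12(1-t)^{1/2},\quad a_{[Nt]}\Delta t_N^{1/2}\to\tfrac12(1-t)^{1/2},$$ $$\Sigma_{[Nt]}\to(1-t)\Sigma_0,\qquad \lambda_{[Nt]}\to\frac{\Sigma_0^{1/2}}{\sigma_u},\qquad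 \frac{\beta_{[Nt]}}{\Delta t_N}\to\frac{\sigma_u}{(1-t)\Sigma_0^{1/2}}.$$
   Context: $[x]$ denotes the integer part of $x$. These sequences describe the equilibrium of the risk-neutral insider model (Model 2) of an $N$-period Kyle-type insider trading model, where $\Sigma_n$ is the conditional variance of the asset value after $n$ rounds, $\lambda_n$ the liquidity parameter and $\beta_n$ the insider's trading intensity; the claim concerns only the sequences as defined here. *)

theory Defs
  imports Complex_Main
begin

definition dtN :: "nat \<Rightarrow> real" where
  "dtN N = 1 / real N"

fun Sigma :: "real \<Rightarrow> (nat \<Rightarrow> real) \<Rightarrow> nat \<Rightarrow> real" where
  "Sigma S0 c 0 = S0"
| "Sigma S0 c (Suc n) = Sigma S0 c n / (1 + (c (Suc n))\<^sup>2)"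

definition beta :: "real \<Rightarrow> real \<Rightarrow> nat \<Rightarrow> (nat \<Rightarrow> real) \<Rightarrow> nat \<Rightarrow> real" where
  "beta S0 su N c n = c n * su * sqrt (dtN N) * (Sigma S0 c (n - 1)) powr (-1/2)"

definition lambda :: "real \<Rightarrow> real \<Rightarrow> nat \<Rightarrow> (nat \<Rightarrow> real) \<Rightarrow> nat \<Rightarrow> real" where
  "lambda S0 su N c n =
     beta S0 su N c n * Sigma S0 c (n - 1) /
       ((beta S0 su N c n)\<^sup>2 * Sigma S0 c (n - 1) + su\<^sup>2 * dtN N)"

definition idx :: "nat \<Rightarrow> real \<Rightarrow> nat" where
  "idx N t = nat \<lfloor>real N * t\<rfloor>"

end

theory Submission
  imports Defs "HOL-Real_Asymp.Real_Asymp"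
begin

text \<open>Write \<open>q\<^sub>n = 1 / c\<^sub>n\<^sup>2\<close>. The equilibrium relations become
  \<open>a\<^sub>n + b\<^sub>n = (q\<^sub>n - 1) / sqrt (q\<^sub>n + 1)\<close> and
  \<open>a\<^sub>n\<^sub>-\<^sub>1 + b\<^sub>n\<^sub>-\<^sub>1 = q\<^sub>n\<^sup>3\<^sup>/\<^sup>2 / (q\<^sub>n + 1)\<close>, an implicit backward
  recursion for \<open>q\<close> started at \<open>q\<^sub>N\<^sub>-\<^sub>1 \<in> [1, 2]\<close>. One backward step raises \<open>q\<close> by
  between \<open>1/2\<close> and \<open>1\<close>, and by at least \<open>1 - 4 / (q + 1)\<close>, so
  \<open>q\<^sub>n = N - n + O(sqrt (N - n))\<close>. Along the way \<open>b\<^sub>n\<close> stays within a bounded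
  distance of \<open>sqrt q\<^sub>n / 2\<close>, and \<open>\<Sigma>\<^sub>n = \<Sigma>\<^sub>0 * (\<Prod>k = 1..n. q\<^sub>k / (q\<^sub>k + 1))\<close>
  telescopes to \<open>\<Sigma>\<^sub>0 q\<^sub>n / (q\<^sub>1 + 1)\<close> up to factors \<open>1 - O((N - k)\<^sup>-\<^sup>2)\<close>.
  At \<open>n = [N t]\<close> this gives \<open>q\<^sub>n \<sim> (1 - t) N\<close>, and every stated limit follows.\<close>

lemma powr_three_halves:
  fixes y :: real
  assumes "0 \<le> y"
  shows "y powr (3/2) = y * sqrt y"
proof -
  have "y powr (3/2) = y powr (1 + 1/2)" by simp
  also have "\<dots> = y powr 1 * y powr (1/2)" by (rule powr_add)
  finally show ?thesis
    using assms by (cases "y = 0") (simp_all add: powr_half_sqrt)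
qed

lemma inverse_square_substitution:
  fixes x q :: real
  assumes "x > 0" and q: "q = 1 / x\<^sup>2"
  shows "(1 / (x\<^sup>2 + 1)) powr (1/2) = sqrt (q / (q + 1))"
    and "(1 / (x\<^sup>2 + 1)) powr (3/2) = q / (q + 1) * sqrt (q / (q + 1))"
    and "x / (x\<^sup>2 + 1) = sqrt q / (q + 1)"
    and "(1 - x\<^sup>2) / (x * (1 + x\<^sup>2) powr (1/2)) = (q - 1) / sqrt (q + 1)"
proof -
  have sq: "sqrt q = 1 / x"
    using assms by (simp add: real_sqrt_divide)
  have q1: "q + 1 = (1 + x\<^sup>2) / x\<^sup>2"
    using assms by (simp add: field_simps)
  have w: "1 / (x\<^sup>2 + 1) = q / (q + 1)"
    using assms unfolding q1 by (simp add: field_simps)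
  show "(1 / (x\<^sup>2 + 1)) powr (1/2) = sqrt (q / (q + 1))"
    unfolding w by (simp add: powr_half_sqrt q)
  show "(1 / (x\<^sup>2 + 1)) powr (3/2) = q / (q + 1) * sqrt (q / (q + 1))"
    unfolding w by (simp add: powr_three_halves q)
  show "x / (x\<^sup>2 + 1) = sqrt q / (q + 1)"
    using assms unfolding sq q1 by (simp add: field_simps power2_eq_square)
  define s where "s = sqrt (1 + x\<^sup>2)"
  have s: "s > 0" "(1 + x\<^sup>2) powr (1/2) = s"
    by (simp_all add: s_def powr_half_sqrt add_pos_nonneg)
  have "sqrt (q + 1) = s / x"
    using \<open>x > 0\<close> unfolding q1 s_def by (simp add: real_sqrt_divide)
  moreover have "q - 1 = (1 - x\<^sup>2) / x\<^sup>2"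
    using \<open>x > 0\<close> by (simp add: q field_simps)
  ultimately have "(q - 1) / sqrt (q + 1) = (1 - x\<^sup>2) / x\<^sup>2 / (s / x)"
    by simp
  also have "\<dots> = (1 - x\<^sup>2) / (x * s)"
    using \<open>x > 0\<close> s by (simp add: field_simps power2_eq_square)
  finally show "(1 - x\<^sup>2) / (x * (1 + x\<^sup>2) powr (1/2)) = (q - 1) / sqrt (q + 1)"
    using s by simp
qed

lemma add_four_div_strict_mono:
  fixes x y :: real
  assumes "x < y" "x > -1" "(x + 1) * (y + 1) > 4"
  shows "x + 4 / (x + 1) < y + 4 / (y + 1)"
proof -
  have "(y + 4 / (y + 1)) - (x + 4 / (x + 1)) = (y - x) * (1 - 4 / ((x + 1) * (y + 1)))"
    using assms by (simp add: field_simps)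
  moreover have "(y - x) * (1 - 4 / ((x + 1) * (y + 1))) > 0"
    using assms by (intro mult_pos_pos) auto
  ultimately show ?thesis
    by simp
qed

lemma diff_div_sqrt_eq_half_bounds:
  fixes P :: real
  assumes "P > 0" and "(P - 1) / sqrt (P + 1) = 1/2"
  shows "1 \<le> P" "P \<le> 2"
proof -
  have P: "P - 1 = sqrt (P + 1) / 2"
    using assms by (simp add: field_simps)
  moreover have "sqrt (P + 1) \<ge> 0"
    using assms(1) by simp
  ultimately show "1 \<le> P"
    by linarith
  have "(P - 1)\<^sup>2 = (P + 1) / 4"
    unfolding P using assms(1) by (simp add: power_divide)
  then have "(P - 2) * (4 * P - 1) = -1"
    by (simp add: algebra_simps power2_eq_square)
  moreover have "(P - 2) * (4 * P - 1) > 0" if "P > 2"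
    using that by (intro mult_pos_pos) auto
  ultimately show "P \<le> 2"
    by force
qed

text \<open>Squaring turns the implicit recursion into an identity for \<open>x \<mapsto> x + 4 / (x + 1)\<close>,
  a function that is increasing on \<open>[1, \<infinity>)\<close>.\<close>

lemma recursion_step_identity:
  fixes P Q :: real
  assumes Q: "Q \<ge> 1" and P: "P > 0"
    and eq: "(P - 1) / sqrt (P + 1) = Q * sqrt Q / (Q + 1)"
  shows "P > 1" and "P + 4 / (P + 1) = Q + 1 + (3 * Q + 2) / (Q + 1)\<^sup>2"
proof -
  have "Q * sqrt Q / (Q + 1) > 0"
    using Q by simp
  then have "(P - 1) / sqrt (P + 1) > 0"
    using eq by simp
  then show "P > 1"
    using P by (simp add: zero_less_divide_iff)
  have "(P - 1)\<^sup>2 / (P + 1) = Q ^ 3 / (Q + 1)\<^sup>2"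
    using arg_cong [OF eq, of "\<lambda>x. x\<^sup>2"] P Q
    by (simp add: power_divide power_mult_distrib power3_eq_cube) (simp add: power2_eq_square)
  moreover have "(P - 1)\<^sup>2 / (P + 1) = P - 3 + 4 / (P + 1)"
    using P by (simp add: field_simps power2_eq_square)
  moreover have "Q ^ 3 / (Q + 1)\<^sup>2 = Q - 2 + (3 * Q + 2) / (Q + 1)\<^sup>2"
  proof -
    have "Q ^ 3 = (Q - 2) * (Q + 1)\<^sup>2 + (3 * Q + 2)"
      by algebra
    then show ?thesis
      using Q by (simp add: add_divide_distrib)
  qed
  ultimately show "P + 4 / (P + 1) = Q + 1 + (3 * Q + 2) / (Q + 1)\<^sup>2"
    by simp
qed

lemma recursion_step_bounds:
  fixes P Q :: real
  assumes Q: "Q \<ge> 1" and P: "P > 0"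
    and eq: "(P - 1) / sqrt (P + 1) = Q * sqrt Q / (Q + 1)"
  shows "Q + 1/2 \<le> P" and "P \<le> Q + 1" and "Q + 1 - 4 / (P + 1) \<le> P"
proof -
  note P1 = recursion_step_identity(1) [OF Q P eq]
  note key = recursion_step_identity(2) [OF Q P eq]
  have "0 \<le> (3 * Q + 2) / (Q + 1)\<^sup>2"
    using Q by simp
  then show "Q + 1 - 4 / (P + 1) \<le> P"
    using key by simp
  show "P \<le> Q + 1"
  proof (rule ccontr)
    assume "\<not> P \<le> Q + 1"
    moreover have "3 * 3 \<le> (Q + 1 + 1) * (P + 1)"
      using Q \<open>\<not> P \<le> Q + 1\<close> by (intro mult_mono) auto
    ultimately have "Q + 1 + 4 / (Q + 2) < P + 4 / (P + 1)"
      using Q add_four_div_strict_mono [of "Q + 1" P] by (simp add: add.commute)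
    moreover have "(3 * Q + 2) / (Q + 1)\<^sup>2 \<le> 4 / (Q + 2)"
      using Q by (simp add: divide_simps) (simp add: algebra_simps power2_eq_square)
    ultimately show False
      using key by simp
  qed
  show "Q + 1/2 \<le> P"
  proof (rule ccontr)
    assume "\<not> Q + 1/2 \<le> P"
    moreover have "2 * (5/2) \<le> (P + 1) * (Q + 1/2 + 1)"
      using Q P1 by (intro mult_mono) auto
    ultimately have "P + 4 / (P + 1) < Q + 1/2 + 4 / (Q + 3/2)"
      using add_four_div_strict_mono [of P "Q + 1/2"] P1 by (simp add: add.commute field_simps)
    moreover have "4 / (Q + 3/2) \<le> 1/2 + (3 * Q + 2) / (Q + 1)\<^sup>2"
    proof -
      have "Q\<^sup>2 \<ge> 1" "Q ^ 3 \<ge> 1"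
        using Q by (simp_all add: one_le_power)
      then have "16 * (Q + 1)\<^sup>2 \<le> ((Q + 1)\<^sup>2 + 2 * (3 * Q + 2)) * (2 * Q + 3)"
        using Q by (simp add: algebra_simps power2_eq_square power3_eq_cube)
      then have "8 / (2 * Q + 3) \<le> ((Q + 1)\<^sup>2 + 2 * (3 * Q + 2)) / (2 * (Q + 1)\<^sup>2)"
        using Q by (simp add: divide_simps)
      moreover have "4 / (Q + 3/2) = 8 / (2 * Q + 3)"
        by (simp add: field_simps)
      moreover have "1/2 + (3 * Q + 2) / (Q + 1)\<^sup>2 = ((Q + 1)\<^sup>2 + 2 * (3 * Q + 2)) / (2 * (Q + 1)\<^sup>2)"
        using Q by (simp add: field_simps)
      ultimately show ?thesis
        by simp
    qed
    ultimately show False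
      using key by simp
  qed
qed

lemma half_sqrt_almost_fixed:
  fixes Q :: real
  assumes "Q \<ge> 0"
  shows "- (1 / ((Q + 1) * sqrt (Q + 1))) / 2
           \<le> sqrt Q / 2 * (Q / (Q + 1)) * sqrt (Q / (Q + 1)) + sqrt Q / (Q + 1) - sqrt (Q + 1) / 2"
    and "sqrt Q / 2 * (Q / (Q + 1)) * sqrt (Q / (Q + 1)) + sqrt Q / (Q + 1) - sqrt (Q + 1) / 2 \<le> 0"
proof -
  define r where "r = sqrt Q"
  define s where "s = sqrt (Q + 1)"
  have r: "r \<ge> 0" "r\<^sup>2 = Q" and s: "s > 0" "s\<^sup>2 = Q + 1"
    using assms by (simp_all add: r_def s_def)
  have "sqrt Q / 2 * (Q / (Q + 1)) * sqrt (Q / (Q + 1)) + sqrt Q / (Q + 1) - sqrt (Q + 1) / 2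
      = r / 2 * (r\<^sup>2 / s\<^sup>2) * (r / s) + r / s\<^sup>2 - s / 2"
    using assms by (simp add: r_def s_def real_sqrt_divide)
  also have "\<dots> = (r ^ 4 + 2 * r * s - s ^ 4) / (2 * s ^ 3)"
    using s(1) by (simp add: field_simps power2_eq_square power3_eq_cube power4_eq_xxxx)
  also have "\<dots> = (2 * r * s - 2 * r\<^sup>2 - 1) / (2 * s ^ 3)"
  proof -
    have "r ^ 4 = (r\<^sup>2)\<^sup>2" "s ^ 4 = (s\<^sup>2)\<^sup>2"
      by algebra+
    then show ?thesis
      using r s by (simp add: algebra_simps power2_eq_square)
  qed
  finally have defect: "sqrt Q / 2 * (Q / (Q + 1)) * sqrt (Q / (Q + 1)) + sqrt Q / (Q + 1) - sqrt (Q + 1) / 2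
      = (2 * r * s - 2 * r\<^sup>2 - 1) / (2 * s ^ 3)" .
  have "r \<le> s"
    unfolding r_def s_def by simp
  then have "r * r \<le> r * s"
    using r(1) by (rule mult_left_mono)
  then have lo: "0 \<le> 2 * r * s - 2 * r\<^sup>2"
    by (simp add: power2_eq_square)
  have "(2 * r * s)\<^sup>2 \<le> (2 * r\<^sup>2 + 1)\<^sup>2"
    using r s by (simp add: power_mult_distrib) (simp add: algebra_simps power2_eq_square)
  then have hi: "2 * r * s - 2 * r\<^sup>2 \<le> 1"
    using power2_le_imp_le [of "2 * r * s" "2 * r\<^sup>2 + 1"] by simp
  have s3: "(Q + 1) * sqrt (Q + 1) = s ^ 3"
    using s by (simp add: s_def power3_eq_cube)
  show "- (1 / ((Q + 1) * sqrt (Q + 1))) / 2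
      \<le> sqrt Q / 2 * (Q / (Q + 1)) * sqrt (Q / (Q + 1)) + sqrt Q / (Q + 1) - sqrt (Q + 1) / 2"
  proof -
    have "-1 / (2 * s ^ 3) \<le> (2 * r * s - 2 * r\<^sup>2 - 1) / (2 * s ^ 3)"
      using lo s by (intro divide_right_mono) auto
    then show ?thesis
      unfolding defect s3 by simp
  qed
  show "sqrt Q / 2 * (Q / (Q + 1)) * sqrt (Q / (Q + 1)) + sqrt Q / (Q + 1) - sqrt (Q + 1) / 2 \<le> 0"
    unfolding defect using hi s by (simp add: divide_nonpos_pos)
qed

lemma sqrt_gap_bound:
  fixes P Q :: real
  assumes "Q \<ge> 0" "Q \<le> P" "P \<le> Q + 1" "Q + 1 - 4 / (P + 1) \<le> P"
  shows "0 \<le> sqrt (Q + 1) - sqrt P" and "sqrt (Q + 1) - sqrt P \<le> 4 / ((Q + 1) * sqrt (Q + 1))"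
proof -
  show "0 \<le> sqrt (Q + 1) - sqrt P"
    using assms by simp
  have pos: "sqrt (Q + 1) > 0" "sqrt P \<ge> 0"
    using assms by simp_all
  have "(sqrt (Q + 1) - sqrt P) * (sqrt (Q + 1) + sqrt P) = (sqrt (Q + 1))\<^sup>2 - (sqrt P)\<^sup>2"
    by (simp add: algebra_simps power2_eq_square)
  also have "\<dots> = Q + 1 - P"
    using assms by simp
  finally have "sqrt (Q + 1) - sqrt P = (Q + 1 - P) / (sqrt (Q + 1) + sqrt P)"
    using pos by (simp add: eq_divide_eq add_nonneg_eq_0_iff)
  also have "\<dots> \<le> (Q + 1 - P) / sqrt (Q + 1)"
  proof (rule divide_left_mono)
    show "0 < (sqrt (Q + 1) + sqrt P) * sqrt (Q + 1)"
      using pos by (intro mult_pos_pos add_pos_nonneg)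
  qed (use assms pos in auto)
  also have "\<dots> \<le> (4 / (Q + 1)) / sqrt (Q + 1)"
  proof (intro divide_right_mono)
    have "4 / (P + 1) \<le> 4 / (Q + 1)"
      using assms by (intro divide_left_mono) auto
    then show "Q + 1 - P \<le> 4 / (Q + 1)"
      using assms by simp
  qed (use assms in simp)
  finally show "sqrt (Q + 1) - sqrt P \<le> 4 / ((Q + 1) * sqrt (Q + 1))"
    by simp
qed

lemma b_error_step:
  fixes P Q B :: real
  assumes Q: "Q \<ge> 0" and P: "Q \<le> P" "P \<le> Q + 1" "Q + 1 - 4 / (P + 1) \<le> P"
  shows "\<bar>B * (Q / (Q + 1)) * sqrt (Q / (Q + 1)) + sqrt Q / (Q + 1) - sqrt P / 2\<bar>
       \<le> \<bar>B - sqrt Q / 2\<bar> + 2 / ((Q + 1) * sqrt (Q + 1))"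
proof -
  define K where "K = (Q / (Q + 1)) * sqrt (Q / (Q + 1))"
  define D where "D = sqrt Q / 2 * K + sqrt Q / (Q + 1) - sqrt (Q + 1) / 2"
  define h where "h = 1 / ((Q + 1) * sqrt (Q + 1))"
  have "h \<ge> 0"
    using Q by (simp add: h_def)
  have w: "0 \<le> Q / (Q + 1)" "Q / (Q + 1) \<le> 1"
    using Q by simp_all
  have K: "0 \<le> K" "K \<le> 1"
    unfolding K_def using w by (intro mult_nonneg_nonneg mult_le_one; simp)+
  have D: "- h / 2 \<le> D" "D \<le> 0"
    using half_sqrt_almost_fixed [OF Q] unfolding D_def K_def h_def by (simp_all only: mult.assoc)
  have gap: "0 \<le> sqrt (Q + 1) - sqrt P" "sqrt (Q + 1) - sqrt P \<le> 4 * h"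
    using sqrt_gap_bound [OF Q P] by (simp_all add: h_def)
  define e where "e = B - sqrt Q / 2"
  define G where "G = sqrt (Q + 1) - sqrt P"
  have "\<bar>e * K\<bar> \<le> \<bar>e\<bar>"
    using K by (simp add: abs_mult mult_left_le)
  then have "\<bar>e * K + D + G / 2\<bar> \<le> \<bar>e\<bar> + 2 * h"
    using D gap \<open>h \<ge> 0\<close> unfolding G_def [symmetric] by (simp add: abs_le_iff)
  moreover have "B * K + sqrt Q / (Q + 1) - sqrt P / 2 = e * K + D + G / 2"
    by (simp add: e_def G_def D_def left_diff_distrib diff_divide_distrib)
  ultimately show ?thesis
    by (simp add: e_def h_def K_def mult.assoc)
qed

lemma inverse_sqrt_decrement_bound:
  fixes y :: real
  assumes "y \<ge> 1"
  shows "2 / (y * sqrt y) \<le> 8 * (1 / sqrt (y - 1/2) - 1 / sqrt y)"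
proof -
  define u where "u = sqrt y"
  define v where "v = sqrt (y - 1/2)"
  have uv: "0 < v" "v \<le> u" "u\<^sup>2 = y" "v\<^sup>2 = y - 1/2"
    using assms by (simp_all add: u_def v_def)
  have "(u - v) * (u + v) = u\<^sup>2 - v\<^sup>2"
    by (simp add: algebra_simps power2_eq_square)
  then have "u - v = 1 / (2 * (u + v))"
    using uv by (simp add: field_simps)
  also have "\<dots> \<ge> 1 / (4 * u)"
    using uv by (simp add: divide_simps)
  finally have "1 / (4 * u) / (u * u) \<le> (u - v) / (u * v)"
    using uv by (intro frac_le) (auto intro: mult_left_mono)
  also have "(u - v) / (u * v) = 1 / v - 1 / u"
    using uv by (simp add: field_simps)
  finally have "1 / (4 * (u * u * u)) \<le> 1 / v - 1 / u"
    by (simp add: mult.assoc)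
  moreover have "2 / (y * sqrt y) = 8 * (1 / (4 * (u * u * u)))"
    using uv by (simp add: u_def power2_eq_square [symmetric])
  ultimately have "2 / (y * sqrt y) \<le> 8 * (1 / v - 1 / u)"
    by simp
  then show ?thesis
    by (simp add: u_def v_def)
qed

lemma b_error_potential_step:
  fixes m P Q B :: real
  assumes m: "m \<ge> 1" and Q: "(m + 1) / 2 \<le> Q"
    and P: "Q \<le> P" "P \<le> Q + 1" "Q + 1 - 4 / (P + 1) \<le> P"
  shows "\<bar>B * (Q / (Q + 1)) * sqrt (Q / (Q + 1)) + sqrt Q / (Q + 1) - sqrt P / 2\<bar> + 8 / sqrt ((m + 2) / 2)
       \<le> \<bar>B - sqrt Q / 2\<bar> + 8 / sqrt ((m + 1) / 2)"
proof -
  define y where "y = (m + 2) / 2"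
  have y: "1 \<le> y" "y \<le> Q + 1"
    using m Q by (simp_all add: y_def)
  have "2 / ((Q + 1) * sqrt (Q + 1)) \<le> 2 / (y * sqrt y)"
    using y by (intro divide_left_mono mult_mono mult_pos_pos) auto
  also have "\<dots> \<le> 8 * (1 / sqrt (y - 1/2) - 1 / sqrt y)"
    using inverse_sqrt_decrement_bound [OF y(1)] .
  also have "\<dots> = 8 / sqrt ((m + 1) / 2) - 8 / sqrt ((m + 2) / 2)"
    by (simp add: y_def field_simps)
  finally show ?thesis
    using b_error_step [of Q P B] Q P m by simp
qed

lemma sqrt_increment_bound:
  fixes m :: real
  assumes "m \<ge> 0"
  shows "8 / (m + 2) \<le> 16 * (sqrt (m + 2) - sqrt (m + 1))"
proof -
  define u where "u = sqrt (m + 2)"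
  define v where "v = sqrt (m + 1)"
  have uv: "1 \<le> u" "0 < v" "v \<le> u" "u\<^sup>2 = m + 2" "v\<^sup>2 = m + 1"
    using assms by (simp_all add: u_def v_def)
  have "1 / (2 * u) \<le> 1 / (u + v)"
    using uv by (simp add: divide_simps)
  also have "1 / (u + v) = u - v"
  proof -
    have "(u - v) * (u + v) = u\<^sup>2 - v\<^sup>2"
      by (simp add: algebra_simps power2_eq_square)
    then show ?thesis
      using uv by (simp add: field_simps)
  qed
  finally have "8 / u \<le> 16 * (u - v)"
    by simp
  moreover have "u \<le> u\<^sup>2"
    using uv(1) by (simp add: power2_eq_square)
  then have "u \<le> m + 2"
    using uv(4) by simp
  then have "8 / (m + 2) \<le> 8 / u"
    using uv by (intro divide_left_mono) auto
  ultimately have "8 / (m + 2) \<le> 16 * (u - v)"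
    by linarith
  then show ?thesis
    by (simp add: u_def v_def)
qed

lemma diff_le_mult_near_one:
  fixes A r d :: real
  assumes "A \<le> 1" "1 - d \<le> r" "r \<le> 1" "0 \<le> d"
  shows "A - d \<le> A * r"
proof (cases "A \<ge> 0")
  case True
  have "A * (1 - d) \<le> A * r" "A * d \<le> 1 * d"
    using True assms by (intro mult_left_mono mult_right_mono; simp)+
  then show ?thesis
    by (simp add: algebra_simps)
next
  case False
  have "A * 1 \<le> A * r"
    using False assms by (intro mult_left_mono_neg) auto
  then show ?thesis
    using assms by simp
qed

section \<open>A single equilibrium\<close>

lemma Sigma_eq_mult_Sigma_one: "Sigma S0 c n = S0 * Sigma 1 c n"
  by (induction n) simp_all

locale kyle_equilibrium =
  fixes N :: nat and a b c :: "nat \<Rightarrow> real"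
  assumes N_ge_2: "N \<ge> 2"
    and c_pos: "\<And>n. 1 \<le> n \<Longrightarrow> n \<le> N \<Longrightarrow> c n > 0"
    and a_last: "a (N - 1) = 0"
    and b_last: "b (N - 1) = 1/2"
    and a_rec: "\<And>n. 1 \<le> n \<Longrightarrow> n \<le> N - 1 \<Longrightarrow>
       a (n - 1) = a n * (1 / ((c n)\<^sup>2 + 1)) powr (1/2)
                    + b n * (1 / ((c n)\<^sup>2 + 1)) powr (3/2) * (c n)\<^sup>2"
    and b_rec: "\<And>n. 1 \<le> n \<Longrightarrow> n \<le> N - 1 \<Longrightarrow>
       b (n - 1) = b n * (1 / ((c n)\<^sup>2 + 1)) powr (3/2) + c n / ((c n)\<^sup>2 + 1)"
    and ab_sum: "\<And>n. 1 \<le> n \<Longrightarrow> n \<le> N - 1 \<Longrightarrow>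
       a n + b n = (1 - (c n)\<^sup>2) / (c n * (1 + (c n)\<^sup>2) powr (1/2))"
begin

definition q :: "nat \<Rightarrow> real" where
  "q n = 1 / (c n)\<^sup>2"

lemma q_pos: "1 \<le> n \<Longrightarrow> n \<le> N \<Longrightarrow> q n > 0"
  using c_pos [of n] by (simp add: q_def)

lemmas q_substitution = inverse_square_substitution [OF c_pos q_def]

lemma ab_sum_q: "1 \<le> n \<Longrightarrow> n \<le> N - 1 \<Longrightarrow> a n + b n = (q n - 1) / sqrt (q n + 1)"
  using ab_sum q_substitution(4) by simp

lemma b_rec_q:
  assumes "Suc n \<le> N - 1"
  shows "b n = b (Suc n) * (q (Suc n) / (q (Suc n) + 1)) * sqrt (q (Suc n) / (q (Suc n) + 1))
              + sqrt (q (Suc n)) / (q (Suc n) + 1)"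
  using b_rec [of "Suc n"] q_substitution(2,3) [of "Suc n"] assms by simp

lemma ab_sum_rec_q:
  assumes "Suc n \<le> N - 1"
  shows "a n + b n = q (Suc n) * sqrt (q (Suc n)) / (q (Suc n) + 1)"
proof -
  define Q where "Q = q (Suc n)"
  define w where "w = Q / (Q + 1)"
  have Q: "Q > 0" "(c (Suc n))\<^sup>2 = 1 / Q"
    using q_pos [of "Suc n"] assms by (simp_all add: Q_def q_def)
  have sub: "(1 / ((c (Suc n))\<^sup>2 + 1)) powr (1/2) = sqrt w"
    "(1 / ((c (Suc n))\<^sup>2 + 1)) powr (3/2) = w * sqrt w"
    "c (Suc n) / ((c (Suc n))\<^sup>2 + 1) = sqrt Q / (Q + 1)"
    using q_substitution(1-3) [of "Suc n"] assms unfolding Q_def w_def by simp_all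
  have "a n = a (Suc n) * sqrt w + b (Suc n) * (w * sqrt w) * (1 / Q)"
    using a_rec [of "Suc n"] assms unfolding sub by (simp add: Q(2))
  moreover have "b n = b (Suc n) * (w * sqrt w) + sqrt Q / (Q + 1)"
    using b_rec [of "Suc n"] assms unfolding sub by simp
  ultimately have "a n + b n = a (Suc n) * sqrt w + b (Suc n) * (w * sqrt w) * (1 / Q + 1) + sqrt Q / (Q + 1)"
    by (simp add: algebra_simps)
  also have "\<dots> = (a (Suc n) + b (Suc n)) * sqrt w + sqrt Q / (Q + 1)"
  proof -
    have "1 / Q + 1 = (Q + 1) / Q"
      using Q(1) by (simp add: field_simps)
    then have "w * (1 / Q + 1) = 1"
      using Q(1) by (simp add: w_def)
    moreover have "b (Suc n) * (w * sqrt w) * (1 / Q + 1) = b (Suc n) * sqrt w * (w * (1 / Q + 1))"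
      by (simp only: mult_ac)
    ultimately show ?thesis
      by (simp add: algebra_simps)
  qed
  also have "\<dots> = (Q - 1) / sqrt (Q + 1) * (sqrt Q / sqrt (Q + 1)) + sqrt Q / (Q + 1)"
    using ab_sum_q [of "Suc n"] assms by (simp add: Q_def w_def real_sqrt_divide)
  also have "\<dots> = ((Q - 1) * sqrt Q + sqrt Q) / (Q + 1)"
    using Q(1) by (simp add: add_divide_distrib)
  also have "\<dots> = Q * sqrt Q / (Q + 1)"
    by (simp add: algebra_simps)
  finally show ?thesis
    by (simp add: Q_def)
qed

lemma q_rec:
  assumes "1 \<le> n" "Suc n \<le> N - 1"
  shows "(q n - 1) / sqrt (q n + 1) = q (Suc n) * sqrt (q (Suc n)) / (q (Suc n) + 1)"
  using ab_sum_q [of n] ab_sum_rec_q [of n] assms by simp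

lemma q_last: "1 \<le> q (N - 1)" "q (N - 1) \<le> 2"
proof -
  have "a (N - 1) + b (N - 1) = (q (N - 1) - 1) / sqrt (q (N - 1) + 1)"
    using ab_sum_q [of "N - 1"] N_ge_2 by simp
  then have "(q (N - 1) - 1) / sqrt (q (N - 1) + 1) = 1/2"
    unfolding a_last b_last by linarith
  moreover have "q (N - 1) > 0"
    using q_pos [of "N - 1"] N_ge_2 by simp
  ultimately show "1 \<le> q (N - 1)" "q (N - 1) \<le> 2"
    using diff_div_sqrt_eq_half_bounds by blast+
qed

definition remaining :: "nat \<Rightarrow> real" where
  "remaining n = real N - real n"

lemma q_step_bounds:
  assumes "1 \<le> n" "Suc n \<le> N - 1" "q (Suc n) \<ge> 1"
  shows "q (Suc n) + 1/2 \<le> q n" "q n \<le> q (Suc n) + 1" "q (Suc n) + 1 - 4 / (q n + 1) \<le> q n"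
proof -
  have "q n > 0"
    using q_pos assms by simp
  then show "q (Suc n) + 1/2 \<le> q n" "q n \<le> q (Suc n) + 1" "q (Suc n) + 1 - 4 / (q n + 1) \<le> q n"
    using recursion_step_bounds [OF assms(3) _ q_rec [OF assms(1,2)]] by blast+
qed

text \<open>The summand \<open>8 / sqrt ((remaining n + 1) / 2)\<close> is a potential: it drops by at least
  the error increment of \<open>b\<close> in each backward step, so the error of \<open>b\<close> stays bounded.\<close>

definition backward_invariant :: "nat \<Rightarrow> bool" where
  "backward_invariant n \<longleftrightarrow>
     (remaining n + 1) / 2 \<le> q n \<and> q n \<le> remaining n + 1
     \<and> remaining n - 16 * sqrt (remaining n + 1) \<le> q n
     \<and> \<bar>b n - sqrt (q n) / 2\<bar> + 8 / sqrt ((remaining n + 1) / 2) \<le> 17/2"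

lemma backward_invariant_last: "backward_invariant (N - 1)"
proof -
  have rem: "remaining (N - 1) = 1"
    using N_ge_2 by (simp add: remaining_def of_nat_diff)
  have "1 \<le> sqrt (q (N - 1))" "sqrt (q (N - 1)) \<le> 2"
    using q_last real_sqrt_le_mono [of "q (N - 1)" 4] by simp_all
  then have "\<bar>b (N - 1) - sqrt (q (N - 1)) / 2\<bar> \<le> 1/2"
    unfolding b_last by (simp add: abs_le_iff)
  moreover have "1 - 16 * sqrt 2 \<le> q (N - 1)"
    using q_last(1) real_sqrt_ge_zero [of 2] by linarith
  ultimately show ?thesis
    unfolding backward_invariant_def rem using q_last by simp
qed

lemma backward_invariant_step:
  assumes n: "1 \<le> n" "Suc n \<le> N - 1" and inv: "backward_invariant (Suc n)"
  shows "backward_invariant n"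
proof -
  define Q where "Q = q (Suc n)"
  define P where "P = q n"
  define m where "m = remaining (Suc n)"
  have rem: "remaining n = m + 1" and m: "m \<ge> 1"
    using n by (simp_all add: m_def remaining_def)
  have Q: "(m + 1) / 2 \<le> Q" "Q \<le> m + 1" "m - 16 * sqrt (m + 1) \<le> Q"
    and b_err: "\<bar>b (Suc n) - sqrt Q / 2\<bar> + 8 / sqrt ((m + 1) / 2) \<le> 17/2"
    using inv unfolding backward_invariant_def Q_def m_def by auto
  then have "Q \<ge> 1"
    using m by simp
  then have P: "Q + 1/2 \<le> P" "P \<le> Q + 1" "Q + 1 - 4 / (P + 1) \<le> P"
    using q_step_bounds [OF n] by (simp_all add: P_def Q_def)
  have "4 / (P + 1) \<le> 4 / ((m + 2) / 2)"
    using P Q m by (intro divide_left_mono) auto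
  also have "\<dots> \<le> 16 * (sqrt (m + 2) - sqrt (m + 1))"
    using sqrt_increment_bound [of m] m by simp
  finally have P_lower: "m + 1 - 16 * sqrt (m + 2) \<le> P"
    using P(3) Q(3) by (simp add: algebra_simps)
  have "\<bar>b n - sqrt P / 2\<bar> + 8 / sqrt ((m + 2) / 2) \<le> \<bar>b (Suc n) - sqrt Q / 2\<bar> + 8 / sqrt ((m + 1) / 2)"
    unfolding b_rec_q [OF n(2)] P_def Q_def
    using b_error_potential_step [OF m Q(1), of P "b (Suc n)"] P by (simp add: P_def Q_def)
  with b_err have "\<bar>b n - sqrt P / 2\<bar> + 8 / sqrt ((m + 2) / 2) \<le> 17/2"
    by linarith
  then show ?thesis
    unfolding backward_invariant_def rem using P Q P_lower by (simp add: P_def add.assoc)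
qed

lemma backward_invariant:
  assumes "1 \<le> n" "n \<le> N - 1"
  shows "backward_invariant n"
  using assms(2,1)
proof (induction rule: inc_induct)
  case base
  show ?case by (rule backward_invariant_last)
next
  case (step k)
  then show ?case
    using backward_invariant_step [of k] by simp
qed

lemma q_bounds:
  assumes "1 \<le> n" "n \<le> N - 1"
  shows "1 \<le> q n" "(remaining n + 1) / 2 \<le> q n" "q n \<le> remaining n + 1"
    "remaining n - 16 * sqrt (remaining n + 1) \<le> q n"
proof -
  have "remaining n \<ge> 1"
    using assms by (simp add: remaining_def)
  then show "1 \<le> q n" "(remaining n + 1) / 2 \<le> q n" "q n \<le> remaining n + 1"
    "remaining n - 16 * sqrt (remaining n + 1) \<le> q n"
    using backward_invariant [OF assms] unfolding backward_invariant_def by auto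
qed

lemma b_error_bound:
  assumes "1 \<le> n" "n \<le> N - 1"
  shows "\<bar>b n - sqrt (q n) / 2\<bar> \<le> 17/2"
proof -
  have "8 / sqrt ((remaining n + 1) / 2) \<ge> 0"
    using assms by (simp add: remaining_def)
  then show ?thesis
    using backward_invariant [OF assms] unfolding backward_invariant_def by linarith
qed

lemma Sigma_Suc_q:
  assumes "Suc k \<le> N"
  shows "Sigma S0 c (Suc k) = Sigma S0 c k * (q (Suc k) / (q (Suc k) + 1))"
proof -
  have "c (Suc k) > 0"
    using c_pos assms by simp
  then have "1 + (c (Suc k))\<^sup>2 = (q (Suc k) + 1) / q (Suc k)"
    by (simp add: q_def field_simps)
  then show ?thesis
    by simp
qed

lemma q_ratio_bounds:
  assumes n: "1 \<le> n" "Suc n \<le> N - 1"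
  shows "q n / (q (Suc n) + 1) \<le> 1"
    and "1 - 16 / ((remaining n + 2) * (remaining n + 3)) \<le> q n / (q (Suc n) + 1)"
proof -
  define m where "m = remaining n"
  have "m \<ge> 1"
    using n by (simp add: m_def remaining_def)
  have Q: "1 \<le> q n" "(m + 1) / 2 \<le> q n" "1 \<le> q (Suc n)" "(m - 1 + 1) / 2 \<le> q (Suc n)"
    using q_bounds [of n] q_bounds [of "Suc n"] n by (auto simp: m_def remaining_def)
  note step = q_step_bounds [OF n Q(3)]
  show "q n / (q (Suc n) + 1) \<le> 1"
    using step(2) Q by simp
  have "(m + 3) / 2 * ((m + 2) / 2) \<le> (q n + 1) * (q (Suc n) + 1)"
    using Q \<open>m \<ge> 1\<close> by (intro mult_mono) auto
  then have "4 / ((q n + 1) * (q (Suc n) + 1)) \<le> 4 / ((m + 3) / 2 * ((m + 2) / 2))"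
    using Q \<open>m \<ge> 1\<close> by (intro divide_left_mono mult_pos_pos) auto
  also have "\<dots> = 16 / ((m + 2) * (m + 3))"
    by (simp add: field_simps)
  finally have "1 - 16 / ((m + 2) * (m + 3)) \<le> 1 - 4 / ((q n + 1) * (q (Suc n) + 1))"
    by simp
  also have "\<dots> = (q (Suc n) + 1 - 4 / (q n + 1)) / (q (Suc n) + 1)"
    using Q by (simp add: diff_divide_distrib)
  also have "\<dots> \<le> q n / (q (Suc n) + 1)"
    using step(3) Q by (intro divide_right_mono) auto
  finally show "1 - 16 / ((remaining n + 2) * (remaining n + 3)) \<le> q n / (q (Suc n) + 1)"
    by (simp add: m_def)
qed

lemma Sigma_one_upper:
  "1 \<le> n \<Longrightarrow> n \<le> N - 1 \<Longrightarrow> Sigma 1 c n \<le> q n / (q 1 + 1)"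
proof (induction n rule: dec_induct)
  case base
  show ?case
    using Sigma_Suc_q [of 0] N_ge_2 by simp
next
  case (step k)
  have Q: "q (Suc k) > 0" "q 1 > 0"
    using q_pos step N_ge_2 by simp_all
  have "Sigma 1 c (Suc k) = Sigma 1 c k * (q (Suc k) / (q (Suc k) + 1))"
    by (rule Sigma_Suc_q) (use step in simp)
  also have "\<dots> \<le> q k / (q 1 + 1) * (q (Suc k) / (q (Suc k) + 1))"
    using step Q by (intro mult_right_mono) simp_all
  also have "\<dots> \<le> (q (Suc k) + 1) / (q 1 + 1) * (q (Suc k) / (q (Suc k) + 1))"
    using q_ratio_bounds(1) [of k] step Q by (intro mult_right_mono divide_right_mono) (simp_all add: field_simps)
  also have "\<dots> = q (Suc k) / (q 1 + 1)"
    using Q by simp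
  finally show ?case .
qed

lemma Sigma_one_lower:
  "1 \<le> n \<Longrightarrow> n \<le> N - 1 \<Longrightarrow>
     q n / (q 1 + 1) * (1 - 16 / (remaining n + 3) + 16 / (real N + 2)) \<le> Sigma 1 c n"
proof (induction n rule: dec_induct)
  case base
  have A: "1 - 16 / (remaining 1 + 3) + 16 / (real N + 2) = 1"
    unfolding remaining_def by (simp add: algebra_simps)
  have "Sigma 1 c 1 = q 1 / (q 1 + 1)"
    using Sigma_Suc_q [of 0] N_ge_2 by simp
  then show ?case
    unfolding A by simp
next
  case (step k)
  define m where "m = remaining k"
  define A where "A = 1 - 16 / (m + 3) + 16 / (real N + 2)"
  define r where "r = q k / (q (Suc k) + 1)"
  have Q: "q (Suc k) > 0" "q 1 > 0"
    using q_pos step N_ge_2 by simp_all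
  have m: "m \<ge> 1" "m + 3 \<le> real N + 2"
    using step by (simp_all add: m_def remaining_def)
  have "A \<le> 1"
    using m by (simp add: A_def divide_left_mono)
  then have step_A: "A - 16 / ((m + 2) * (m + 3)) \<le> A * r"
    using q_ratio_bounds [of k] step m
    by (intro diff_le_mult_near_one) (simp_all add: r_def m_def)
  have A_Suc: "1 - 16 / (remaining (Suc k) + 3) + 16 / (real N + 2) = A - 16 / ((m + 2) * (m + 3))"
  proof -
    have rem: "remaining (Suc k) + 3 = m + 2"
      by (simp add: m_def remaining_def)
    have "16 / (m + 2) - 16 / (m + 3) = 16 / ((m + 2) * (m + 3))"
      using m by (simp add: field_simps)
    then show ?thesis
      unfolding A_def rem by linarith
  qed
  have "q (Suc k) / (q 1 + 1) * (1 - 16 / (remaining (Suc k) + 3) + 16 / (real N + 2))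
      \<le> q (Suc k) / (q 1 + 1) * (A * r)"
    unfolding A_Suc using step_A Q by (intro mult_left_mono) simp_all
  also have "\<dots> = q k / (q 1 + 1) * A * (q (Suc k) / (q (Suc k) + 1))"
    using Q by (simp add: r_def field_simps)
  also have "\<dots> \<le> Sigma 1 c k * (q (Suc k) / (q (Suc k) + 1))"
    using step Q by (intro mult_right_mono) (simp_all add: A_def m_def)
  also have "\<dots> = Sigma 1 c (Suc k)"
    by (rule Sigma_Suc_q [symmetric]) (use step in simp)
  finally show ?case .
qed

end

section \<open>Asymptotics along \<open>n = [N t]\<close>\<close>

lemma eventually_idx_bounds:
  assumes "0 < t" "t < 1"
  shows "eventually (\<lambda>N. 2 \<le> N \<and> 1 \<le> idx N t \<and> idx N t \<le> N - 1
           \<and> (1 - t) * real N \<le> real N - real (idx N t)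
           \<and> real N - real (idx N t) \<le> (1 - t) * real N + 1) sequentially"
proof (rule eventually_sequentiallyI [of "nat \<lceil>1 / t\<rceil> + 2"])
  fix N :: nat
  assume N: "nat \<lceil>1 / t\<rceil> + 2 \<le> N"
  have "1 / t \<le> real_of_int \<lceil>1 / t\<rceil>"
    by (rule le_of_int_ceiling)
  also have "\<dots> \<le> real N"
    using N assms by linarith
  finally have "1 \<le> real N * t"
    using assms by (simp add: divide_le_eq)
  moreover have "real N * t < real N"
    using assms N by simp
  moreover have "real (idx N t) = real_of_int \<lfloor>real N * t\<rfloor>"
    using \<open>1 \<le> real N * t\<close> by (simp add: idx_def)
  moreover have "1 \<le> \<lfloor>real N * t\<rfloor>"
    using \<open>1 \<le> real N * t\<close> by (simp add: le_floor_iff)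
  ultimately have "1 \<le> real (idx N t)" "real (idx N t) < real N"
    "real N * t - 1 < real (idx N t)" "real (idx N t) \<le> real N * t"
    by linarith+
  then show "2 \<le> N \<and> 1 \<le> idx N t \<and> idx N t \<le> N - 1
      \<and> (1 - t) * real N \<le> real N - real (idx N t)
      \<and> real N - real (idx N t) \<le> (1 - t) * real N + 1"
    using N by (auto simp: algebra_simps)
qed

lemma sqrt_dtN: "sqrt (dtN N) = 1 / sqrt (real N)"
  by (simp add: dtN_def real_sqrt_divide)

lemma tendsto_sqrt_dtN: "(\<lambda>N. sqrt (dtN N)) \<longlonglongrightarrow> 0"
  unfolding dtN_def by real_asymp

lemma filterlim_at_top_if_tendsto_mult_sqrt_dtN:
  fixes f :: "nat \<Rightarrow> real"
  assumes "(\<lambda>N. f N * sqrt (dtN N)) \<longlonglongrightarrow> L" "L > 0"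
  shows "filterlim f at_top sequentially"
proof -
  have "filterlim (\<lambda>N. f N * sqrt (dtN N) * sqrt (real N)) at_top sequentially"
    by (rule filterlim_tendsto_pos_mult_at_top [OF assms]) real_asymp
  moreover have "eventually (\<lambda>N. f N * sqrt (dtN N) * sqrt (real N) = f N) sequentially"
    using eventually_gt_at_top [of 0] by eventually_elim (simp add: sqrt_dtN)
  ultimately show ?thesis
    by (rule filterlim_cong [OF refl refl, THEN iffD1, rotated])
qed

lemma beta_div_dtN:
  assumes "N > 0"
  shows "beta S0 su N c n / dtN N = c n / sqrt (dtN N) * su * Sigma S0 c (n - 1) powr (-1/2)"
proof -
  define d where "d = dtN N"
  define X where "X = Sigma S0 c (n - 1) powr (-1/2)"
  have "sqrt d > 0"
    using assms by (simp add: d_def dtN_def)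
  then have "sqrt d / d = 1 / sqrt d"
    by (simp add: field_simps)
  have "c n * su * sqrt d * X / d = c n * su * X * (sqrt d / d)"
    by simp
  also have "\<dots> = c n / sqrt d * su * X"
    unfolding \<open>sqrt d / d = 1 / sqrt d\<close> by simp
  finally show ?thesis
    by (simp add: beta_def d_def X_def)
qed

lemma lambda_eq_beta_div_dtN:
  assumes "N > 0"
  shows "lambda S0 su N c n
    = beta S0 su N c n / dtN N * Sigma S0 c (n - 1)
      / ((beta S0 su N c n / dtN N)\<^sup>2 * dtN N * Sigma S0 c (n - 1) + su\<^sup>2)"
proof -
  define B where "B = beta S0 su N c n"
  define S where "S = Sigma S0 c (n - 1)"
  define d where "d = dtN N"
  have "d > 0"
    using assms by (simp add: d_def dtN_def)
  then have "(B / d)\<^sup>2 * d * S + su\<^sup>2 = (B\<^sup>2 * S + su\<^sup>2 * d) / d"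
    by (simp add: field_simps power2_eq_square)
  moreover have "B / d * S / (Y / d) = B * S / Y" for Y
    using \<open>d > 0\<close> by (cases "Y = 0") (simp_all add: field_simps)
  ultimately have "B / d * S / ((B / d)\<^sup>2 * d * S + su\<^sup>2) = B * S / (B\<^sup>2 * S + su\<^sup>2 * d)"
    by simp
  then show ?thesis
    unfolding lambda_def B_def S_def d_def by (rule sym)
qed

locale kyle_family =
  fixes a b c :: "nat \<Rightarrow> nat \<Rightarrow> real" and t :: real
  assumes c_pos: "\<And>N n. N \<ge> 1 \<Longrightarrow> 1 \<le> n \<Longrightarrow> n \<le> N \<Longrightarrow> c N n > 0"
    and a_last: "\<And>N. N \<ge> 1 \<Longrightarrow> a N (N - 1) = 0"
    and b_last: "\<And>N. N \<ge> 1 \<Longrightarrow> b N (N - 1) = 1/2"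
    and a_rec: "\<And>N n. N \<ge> 1 \<Longrightarrow> 1 \<le> n \<Longrightarrow> n \<le> N - 1 \<Longrightarrow>
       a N (n - 1) = a N n * (1 / ((c N n)\<^sup>2 + 1)) powr (1/2)
                    + b N n * (1 / ((c N n)\<^sup>2 + 1)) powr (3/2) * (c N n)\<^sup>2"
    and b_rec: "\<And>N n. N \<ge> 1 \<Longrightarrow> 1 \<le> n \<Longrightarrow> n \<le> N - 1 \<Longrightarrow>
       b N (n - 1) = b N n * (1 / ((c N n)\<^sup>2 + 1)) powr (3/2) + c N n / ((c N n)\<^sup>2 + 1)"
    and ab_sum: "\<And>N n. N \<ge> 1 \<Longrightarrow> 1 \<le> n \<Longrightarrow> n \<le> N - 1 \<Longrightarrow>
       a N n + b N n = (1 - (c N n)\<^sup>2) / (c N n * (1 + (c N n)\<^sup>2) powr (1/2))"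
    and t: "0 < t" "t < 1"
begin

abbreviation q :: "nat \<Rightarrow> nat \<Rightarrow> real" where
  "q N \<equiv> kyle_equilibrium.q (c N)"

lemma kyle_equilibrium_at:
  assumes "N \<ge> 2"
  shows "kyle_equilibrium N (a N) (b N) (c N)"
  by unfold_locales (use assms c_pos a_last b_last a_rec b_rec ab_sum in auto)

lemma q_eq: "N \<ge> 2 \<Longrightarrow> q N n = 1 / (c N n)\<^sup>2"
  using kyle_equilibrium.q_def [OF kyle_equilibrium_at] .

lemma eventually_kyle_equilibrium:
  "eventually (\<lambda>N. kyle_equilibrium N (a N) (b N) (c N) \<and> 1 \<le> idx N t \<and> idx N t \<le> N - 1
      \<and> (1 - t) * real N \<le> real N - real (idx N t)
      \<and> real N - real (idx N t) \<le> (1 - t) * real N + 1) sequentially"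
  using eventually_idx_bounds [OF t] by eventually_elim (simp add: kyle_equilibrium_at)

lemma eventually_q_idx_bounds:
  "eventually (\<lambda>N. (1 - t) * real N - 16 * sqrt (real N + 2) \<le> q N (idx N t)
      \<and> q N (idx N t) \<le> (1 - t) * real N + 2) sequentially"
  using eventually_kyle_equilibrium
proof eventually_elim
  case (elim N)
  then have K: "kyle_equilibrium N (a N) (b N) (c N)" and n: "1 \<le> idx N t" "idx N t \<le> N - 1"
    by simp_all
  define m where "m = real N - real (idx N t)"
  have q: "m - 16 * sqrt (m + 1) \<le> q N (idx N t)" "q N (idx N t) \<le> m + 1"
    using kyle_equilibrium.q_bounds(3,4) [OF K n] by (simp_all add: kyle_equilibrium.remaining_def [OF K] m_def)
  have m: "(1 - t) * real N \<le> m" "m \<le> (1 - t) * real N + 1"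
    using elim by (simp_all add: m_def)
  then have "m + 1 \<le> real N + 2"
    using t mult_right_mono [of "1 - t" 1 "real N"] by simp
  then have "sqrt (m + 1) \<le> sqrt (real N + 2)"
    by simp
  then show ?case
    using q m by linarith
qed

lemma eventually_q_one_bounds:
  "eventually (\<lambda>N. real N - 1 - 16 * sqrt (real N) \<le> q N 1 \<and> q N 1 \<le> real N) sequentially"
  using eventually_kyle_equilibrium
proof eventually_elim
  case (elim N)
  then have K: "kyle_equilibrium N (a N) (b N) (c N)" and "1 \<le> N - 1"
    by auto
  then show ?case
    using kyle_equilibrium.q_bounds(3,4) [OF K, of 1]
    by (simp add: kyle_equilibrium.remaining_def [OF K])
qed

lemma tendsto_q_idx: "(\<lambda>N. q N (idx N t) / real N) \<longlonglongrightarrow> 1 - t"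
proof (rule tendsto_sandwich)
  show "eventually (\<lambda>N. ((1 - t) * real N - 16 * sqrt (real N + 2)) / real N \<le> q N (idx N t) / real N)
      sequentially"
    using eventually_q_idx_bounds by eventually_elim (simp add: divide_right_mono)
  show "eventually (\<lambda>N. q N (idx N t) / real N \<le> ((1 - t) * real N + 2) / real N) sequentially"
    using eventually_q_idx_bounds by eventually_elim (simp add: divide_right_mono)
qed real_asymp+

lemma tendsto_q_one: "(\<lambda>N. q N 1 / real N) \<longlonglongrightarrow> 1"
proof (rule tendsto_sandwich)
  show "eventually (\<lambda>N. (real N - 1 - 16 * sqrt (real N)) / real N \<le> q N 1 / real N) sequentially"
    using eventually_q_one_bounds by eventually_elim (simp add: divide_right_mono)
  show "eventually (\<lambda>N. q N 1 / real N \<le> 1) sequentially"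
    using eventually_q_one_bounds by eventually_elim (simp add: divide_le_eq)
qed real_asymp+

lemma tendsto_q_ratio: "(\<lambda>N. q N (idx N t) / (q N 1 + 1)) \<longlonglongrightarrow> 1 - t"
proof -
  have "(\<lambda>N. (q N (idx N t) / real N) / (q N 1 / real N + 1 / real N)) \<longlonglongrightarrow> (1 - t) / (1 + 0)"
    by (intro tendsto_divide tendsto_add tendsto_q_idx tendsto_q_one lim_1_over_n) simp
  moreover have "eventually (\<lambda>N. (q N (idx N t) / real N) / (q N 1 / real N + 1 / real N)
      = q N (idx N t) / (q N 1 + 1)) sequentially"
    using eventually_gt_at_top [of 0] by eventually_elim (simp add: add_divide_distrib [symmetric])
  ultimately show ?thesis
    by (simp add: Lim_transform_eventually)
qed

lemma eventually_Sigma_one_bounds: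
  "eventually (\<lambda>N. q N (idx N t) / (q N 1 + 1) * (1 - 16 / ((1 - t) * real N + 3)) \<le> Sigma 1 (c N) (idx N t)
      \<and> Sigma 1 (c N) (idx N t) \<le> q N (idx N t) / (q N 1 + 1)) sequentially"
  using eventually_kyle_equilibrium
proof eventually_elim
  case (elim N)
  then have K: "kyle_equilibrium N (a N) (b N) (c N)" and n: "1 \<le> idx N t" "idx N t \<le> N - 1"
    and m: "(1 - t) * real N \<le> real N - real (idx N t)"
    by simp_all
  define R where "R = q N (idx N t) / (q N 1 + 1)"
  have "0 \<le> R"
    using kyle_equilibrium.q_bounds(1) [OF K n] kyle_equilibrium.q_bounds(1) [OF K, of 1] n
    by (simp add: R_def)
  have "0 < (1 - t) * real N + 3"
    using t by (simp add: add_nonneg_pos)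
  then have "16 / (real N - real (idx N t) + 3) \<le> 16 / ((1 - t) * real N + 3)"
    using m by (intro divide_left_mono) auto
  moreover have "0 \<le> 16 / (real N + 2)"
    by simp
  ultimately have "1 - 16 / ((1 - t) * real N + 3) \<le> 1 - 16 / (real N - real (idx N t) + 3) + 16 / (real N + 2)"
    by linarith
  then have "R * (1 - 16 / ((1 - t) * real N + 3))
      \<le> R * (1 - 16 / (real N - real (idx N t) + 3) + 16 / (real N + 2))"
    using \<open>0 \<le> R\<close> by (rule mult_left_mono)
  also have "\<dots> \<le> Sigma 1 (c N) (idx N t)"
    using kyle_equilibrium.Sigma_one_lower [OF K n]
    by (simp add: R_def kyle_equilibrium.remaining_def [OF K])
  finally show ?case
    using kyle_equilibrium.Sigma_one_upper [OF K n] by (simp add: R_def)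
qed

lemma tendsto_Sigma_idx: "(\<lambda>N. Sigma S0 (c N) (idx N t)) \<longlonglongrightarrow> (1 - t) * S0"
proof -
  have "(\<lambda>N. Sigma 1 (c N) (idx N t)) \<longlonglongrightarrow> 1 - t"
  proof (rule tendsto_sandwich [OF _ _ _ tendsto_q_ratio])
    have "(\<lambda>N. 1 - 16 / ((1 - t) * real N + 3)) \<longlonglongrightarrow> 1"
      using t by real_asymp
    from tendsto_mult [OF tendsto_q_ratio this]
    show "(\<lambda>N. q N (idx N t) / (q N 1 + 1) * (1 - 16 / ((1 - t) * real N + 3))) \<longlonglongrightarrow> 1 - t"
      by simp
  qed (use eventually_Sigma_one_bounds in \<open>eventually_elim, simp\<close>)+
  then show ?thesis
    unfolding Sigma_eq_mult_Sigma_one [of S0] by (simp add: tendsto_mult_left mult.commute)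
qed

lemma eventually_c_idx_pos: "eventually (\<lambda>N. c N (idx N t) > 0) sequentially"
  using eventually_kyle_equilibrium by eventually_elim (rule c_pos; auto)

lemma tendsto_c_idx_div_sqrt_dtN: "(\<lambda>N. c N (idx N t) / sqrt (dtN N)) \<longlonglongrightarrow> 1 / sqrt (1 - t)"
proof -
  have "(\<lambda>N. 1 / sqrt (q N (idx N t) / real N)) \<longlonglongrightarrow> 1 / sqrt (1 - t)"
    using t by (intro tendsto_divide tendsto_real_sqrt tendsto_q_idx tendsto_const) simp
  moreover have "eventually (\<lambda>N. 1 / sqrt (q N (idx N t) / real N) = c N (idx N t) / sqrt (dtN N)) sequentially"
    using eventually_c_idx_pos eventually_ge_at_top [of 2]
    by eventually_elim (simp add: q_eq sqrt_dtN real_sqrt_divide real_sqrt_mult)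
  ultimately show ?thesis
    by (rule Lim_transform_eventually)
qed

lemma tendsto_c_idx: "(\<lambda>N. c N (idx N t)) \<longlonglongrightarrow> 0"
proof -
  have "(\<lambda>N. c N (idx N t) / sqrt (dtN N) * sqrt (dtN N)) \<longlonglongrightarrow> 1 / sqrt (1 - t) * 0"
    by (intro tendsto_mult tendsto_c_idx_div_sqrt_dtN tendsto_sqrt_dtN)
  moreover have "eventually (\<lambda>N. c N (idx N t) / sqrt (dtN N) * sqrt (dtN N) = c N (idx N t)) sequentially"
    using eventually_gt_at_top [of 0] by eventually_elim (simp add: dtN_def)
  ultimately show ?thesis
    by (simp add: Lim_transform_eventually)
qed

lemma tendsto_b_idx_mult_sqrt_dtN: "(\<lambda>N. b N (idx N t) * sqrt (dtN N)) \<longlonglongrightarrow> (1/2) * sqrt (1 - t)"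
proof -
  have "eventually (\<lambda>N. norm ((b N (idx N t) - sqrt (q N (idx N t)) / 2) * sqrt (dtN N))
      \<le> norm (sqrt (dtN N)) * (17/2)) sequentially"
    using eventually_kyle_equilibrium
  proof eventually_elim
    case (elim N)
    then have "\<bar>b N (idx N t) - sqrt (q N (idx N t)) / 2\<bar> \<le> 17/2"
      using kyle_equilibrium.b_error_bound by blast
    then have "\<bar>sqrt (dtN N)\<bar> * \<bar>b N (idx N t) - sqrt (q N (idx N t)) / 2\<bar> \<le> \<bar>sqrt (dtN N)\<bar> * (17/2)"
      by (rule mult_left_mono) simp
    then show ?case
      by (simp add: abs_mult mult.commute)
  qed
  with tendsto_sqrt_dtN have error: "(\<lambda>N. (b N (idx N t) - sqrt (q N (idx N t)) / 2) * sqrt (dtN N)) \<longlonglongrightarrow> 0"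
    by (rule tendsto_0_le)
  have "(\<lambda>N. sqrt (q N (idx N t) / real N) / 2 + (b N (idx N t) - sqrt (q N (idx N t)) / 2) * sqrt (dtN N))
      \<longlonglongrightarrow> sqrt (1 - t) / 2 + 0"
    by (intro tendsto_add tendsto_divide tendsto_real_sqrt tendsto_q_idx error) simp_all
  moreover have "eventually (\<lambda>N. sqrt (q N (idx N t) / real N) / 2
      + (b N (idx N t) - sqrt (q N (idx N t)) / 2) * sqrt (dtN N) = b N (idx N t) * sqrt (dtN N)) sequentially"
    by (rule always_eventually) (simp add: dtN_def real_sqrt_divide algebra_simps)
  ultimately show ?thesis
    by (simp add: Lim_transform_eventually)
qed

lemma tendsto_a_idx_mult_sqrt_dtN: "(\<lambda>N. a N (idx N t) * sqrt (dtN N)) \<longlonglongrightarrow> (1/2) * sqrt (1 - t)"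
proof -
  have "(\<lambda>N. (q N (idx N t) / real N - 1 / real N) / sqrt (q N (idx N t) / real N + 1 / real N))
      \<longlonglongrightarrow> (1 - t - 0) / sqrt (1 - t + 0)"
    using t by (intro tendsto_divide tendsto_diff tendsto_add tendsto_real_sqrt tendsto_q_idx
        lim_1_over_n) simp
  then have "(\<lambda>N. (q N (idx N t) / real N - 1 / real N) / sqrt (q N (idx N t) / real N + 1 / real N)
      - b N (idx N t) * sqrt (dtN N)) \<longlonglongrightarrow> sqrt (1 - t) - (1/2) * sqrt (1 - t)"
    using t by (intro tendsto_diff tendsto_b_idx_mult_sqrt_dtN) (simp_all add: real_div_sqrt)
  moreover have "eventually (\<lambda>N. (q N (idx N t) / real N - 1 / real N) / sqrt (q N (idx N t) / real N + 1 / real N)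
      - b N (idx N t) * sqrt (dtN N) = a N (idx N t) * sqrt (dtN N)) sequentially"
    using eventually_kyle_equilibrium
  proof eventually_elim
    case (elim N)
    then have K: "kyle_equilibrium N (a N) (b N) (c N)" and n: "1 \<le> idx N t" "idx N t \<le> N - 1"
      by simp_all
    define Q where "Q = q N (idx N t)"
    define r where "r = sqrt (real N)"
    have pos: "r > 0" "sqrt (Q + 1) > 0"
      using kyle_equilibrium.q_bounds(1) [OF K n] n by (simp_all add: Q_def r_def)
    have "(Q / real N - 1 / real N) / sqrt (Q / real N + 1 / real N) = (Q - 1) / (r * r) / (sqrt (Q + 1) / r)"
      by (simp add: r_def add_divide_distrib [symmetric] diff_divide_distrib [symmetric] real_sqrt_divide)
    also have "\<dots> = (Q - 1) / sqrt (Q + 1) * (1 / r)"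
      using pos by (simp add: field_simps)
    also have "\<dots> = (a N (idx N t) + b N (idx N t)) * sqrt (dtN N)"
      using kyle_equilibrium.ab_sum_q [OF K n] by (simp add: Q_def sqrt_dtN r_def)
    finally show ?case
      unfolding Q_def by (simp add: algebra_simps)
  qed
  ultimately show ?thesis
    by (simp add: Lim_transform_eventually)
qed

lemma tendsto_Sigma_prev_idx: "(\<lambda>N. Sigma S0 (c N) (idx N t - 1)) \<longlonglongrightarrow> (1 - t) * S0"
proof -
  have "(\<lambda>N. Sigma S0 (c N) (idx N t) * (1 + (c N (idx N t))\<^sup>2)) \<longlonglongrightarrow> (1 - t) * S0 * (1 + 0\<^sup>2)"
    by (intro tendsto_mult tendsto_add tendsto_power tendsto_Sigma_idx tendsto_c_idx tendsto_const)
  moreover have "eventually (\<lambda>N. Sigma S0 (c N) (idx N t) * (1 + (c N (idx N t))\<^sup>2)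
      = Sigma S0 (c N) (idx N t - 1)) sequentially"
    using eventually_kyle_equilibrium
  proof eventually_elim
    case (elim N)
    then obtain k where "idx N t = Suc k"
      using not0_implies_Suc by fastforce
    moreover have "1 + (c N (Suc k))\<^sup>2 > 0"
      by (simp add: add_pos_nonneg)
    ultimately show ?case
      by simp
  qed
  ultimately show ?thesis
    by (simp add: Lim_transform_eventually)
qed

lemma tendsto_beta_idx_div_dtN:
  assumes "S0 > 0"
  shows "(\<lambda>N. beta S0 su N (c N) (idx N t) / dtN N) \<longlonglongrightarrow> su / ((1 - t) * sqrt S0)"
proof -
  have "(\<lambda>N. c N (idx N t) / sqrt (dtN N) * su * Sigma S0 (c N) (idx N t - 1) powr (-1/2))
      \<longlonglongrightarrow> 1 / sqrt (1 - t) * su * ((1 - t) * S0) powr (-1/2)"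
    using assms t by (intro tendsto_mult tendsto_powr tendsto_c_idx_div_sqrt_dtN tendsto_Sigma_prev_idx
        tendsto_const) simp_all
  moreover have "1 / sqrt (1 - t) * su * ((1 - t) * S0) powr (-1/2) = su / ((1 - t) * sqrt S0)"
    using assms t by (simp add: powr_minus_divide powr_half_sqrt real_sqrt_mult)
  moreover have "eventually (\<lambda>N. c N (idx N t) / sqrt (dtN N) * su * Sigma S0 (c N) (idx N t - 1) powr (-1/2)
      = beta S0 su N (c N) (idx N t) / dtN N) sequentially"
    using eventually_gt_at_top [of 0] by eventually_elim (simp add: beta_div_dtN)
  ultimately show ?thesis
    by (simp add: Lim_transform_eventually)
qed

lemma tendsto_lambda_idx:
  assumes "S0 > 0" "su \<noteq> 0"
  shows "(\<lambda>N. lambda S0 su N (c N) (idx N t)) \<longlonglongrightarrow> sqrt S0 / su"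
proof -
  define B where "B = su / ((1 - t) * sqrt S0)"
  have "(\<lambda>N. beta S0 su N (c N) (idx N t) / dtN N * Sigma S0 (c N) (idx N t - 1)
      / ((beta S0 su N (c N) (idx N t) / dtN N)\<^sup>2 * dtN N * Sigma S0 (c N) (idx N t - 1) + su\<^sup>2))
      \<longlonglongrightarrow> B * ((1 - t) * S0) / (B\<^sup>2 * 0 * ((1 - t) * S0) + su\<^sup>2)"
    using assms unfolding B_def
    by (intro tendsto_intros tendsto_beta_idx_div_dtN tendsto_Sigma_prev_idx) (simp_all add: dtN_def lim_1_over_n)
  moreover have "B * ((1 - t) * S0) / (B\<^sup>2 * 0 * ((1 - t) * S0) + su\<^sup>2) = sqrt S0 / su"
    using assms t by (simp add: B_def power2_eq_square real_div_sqrt field_simps)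
  moreover have "eventually (\<lambda>N. beta S0 su N (c N) (idx N t) / dtN N * Sigma S0 (c N) (idx N t - 1)
      / ((beta S0 su N (c N) (idx N t) / dtN N)\<^sup>2 * dtN N * Sigma S0 (c N) (idx N t - 1) + su\<^sup>2)
      = lambda S0 su N (c N) (idx N t)) sequentially"
    using eventually_gt_at_top [of 0] by eventually_elim (simp add: lambda_eq_beta_div_dtN)
  ultimately show ?thesis
    by (simp add: Lim_transform_eventually)
qed

end

theorem theorem4:
  fixes a b c :: "nat \<Rightarrow> nat \<Rightarrow> real" and S0 su t :: real
  assumes cpos: "\<And>N n. N \<ge> 1 \<Longrightarrow> 1 \<le> n \<Longrightarrow> n \<le> N \<Longrightarrow> c N n > 0"
    and aterm: "\<And>N. N \<ge> 1 \<Longrightarrow> a N (N - 1) = 0"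
    and bterm: "\<And>N. N \<ge> 1 \<Longrightarrow> b N (N - 1) = 1/2"
    and cterm: "\<And>N. N \<ge> 1 \<Longrightarrow> c N N = 1"
    and arec: "\<And>N n. N \<ge> 1 \<Longrightarrow> 1 \<le> n \<Longrightarrow> n \<le> N - 1 \<Longrightarrow>
       a N (n - 1) = a N n * (1 / ((c N n)\<^sup>2 + 1)) powr (1/2)
                    + b N n * (1 / ((c N n)\<^sup>2 + 1)) powr (3/2) * (c N n)\<^sup>2"
    and brec: "\<And>N n. N \<ge> 1 \<Longrightarrow> 1 \<le> n \<Longrightarrow> n \<le> N - 1 \<Longrightarrow>
       b N (n - 1) = b N n * (1 / ((c N n)\<^sup>2 + 1)) powr (3/2)
                    + c N n / ((c N n)\<^sup>2 + 1)"
    and abrel: "\<And>N n. N \<ge> 1 \<Longrightarrow> 1 \<le> n \<Longrightarrow> n \<le> N - 1 \<Longrightarrow>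
       a N n + b N n = (1 - (c N n)\<^sup>2) / (c N n * (1 + (c N n)\<^sup>2) powr (1/2))"
    and S0pos: "S0 > 0"
    and supos: "su > 0"
    and t01: "0 < t" "t < 1"
  shows "((\<lambda>N. c N (idx N t)) \<longlonglongrightarrow> 0)
    \<and> (filterlim (\<lambda>N. b N (idx N t)) at_top sequentially)
    \<and> (filterlim (\<lambda>N. a N (idx N t)) at_top sequentially)
    \<and> ((\<lambda>N. c N (idx N t) / sqrt (dtN N)) \<longlonglongrightarrow> 1 / sqrt (1 - t))
    \<and> ((\<lambda>N. b N (idx N t) * sqrt (dtN N)) \<longlonglongrightarrow> (1/2) * sqrt (1 - t))
    \<and> ((\<lambda>N. a N (idx N t) * sqrt (dtN N)) \<longlonglongrightarrow> (1/2) * sqrt (1 - t))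
    \<and> ((\<lambda>N. Sigma S0 (c N) (idx N t)) \<longlonglongrightarrow> (1 - t) * S0)
    \<and> ((\<lambda>N. lambda S0 su N (c N) (idx N t)) \<longlonglongrightarrow> sqrt S0 / su)
    \<and> ((\<lambda>N. beta S0 su N (c N) (idx N t) / dtN N) \<longlonglongrightarrow> su / ((1 - t) * sqrt S0))"
proof -
  interpret kyle_family a b c t
    by unfold_locales (use cpos aterm bterm arec brec abrel t01 in auto)
  \<comment> \<open>\<open>cterm\<close> is not needed: only the indices \<open>n \<le> N - 1\<close> enter.\<close>
  have "(1/2) * sqrt (1 - t) > 0"
    using t01 by simp
  then show ?thesis
    using tendsto_c_idx tendsto_c_idx_div_sqrt_dtN tendsto_b_idx_mult_sqrt_dtN tendsto_a_idx_mult_sqrt_dtN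
      filterlim_at_top_if_tendsto_mult_sqrt_dtN tendsto_Sigma_idx tendsto_beta_idx_div_dtN [OF S0pos]
      tendsto_lambda_idx [OF S0pos] supos
    by simp
qed

end
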